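(* Let $f=\frac1n\sum_{i=1}^n f_i$ be convex, and suppose each $f_i$ is $L_i$-smooth for some $L_i>0$. Let $L=\max_{1\le i\le n}L_i$, let $\mu\in(0,1/L]$, and let the integers $t(k)\ge1$ satisfy $\sum_{k=0}^\infty\beta^{t(k)}<\infty$. Let $\{\mathbf{x}_k\}$ be generated by NEAR-DGD$^+$ from an arbitrary initial point. Then $$f\Big(\frac1T\sum_{k=0}^{T-1}\bar x_k\Big)-f^*=O\Big(\frac1T\Big)\qquad\text{for } T\in\mathbb{N},$$ i.e. there is a constant $C>0$ independent of $T$ bounding $T$ times the left-hand side.
   Context: Let $n,p\in\mathbb{N}$. $W=(w_{ij})$ is an $n\times n$ doubly stochastic matrix whose associated directed graph is strongly connected and has a self-loop at every vertex ($w_{ii}>0$). $1_n\in\mathbb{R}^n$ is the all-ones vector, and $\beta\in[0,1)$ denotes the spectral norm of $W-\frac1n1_n1_n^\top$. Local costs $f_i:\mathbb{R}^p\to\mathbb{R}$ are differentiable, $f=\frac1n\sum_i f_i$, $f^*=\min f$, and the set of minimizers $X^*$ is assumed nonempty. A function $h$ is $L$-smooth if $\|\nabla h(x)-\nabla h(y)\|\le L\|x-y\|$ for all $x,y$. For $\mathbf{x}=(x_1^\top,\dots,x_n^\top)^\top\in\mathbb{R}^{np}$ put $\nabla F(\mathbf{x})=(\nabla f_1(x_1)^\top,\dots,\nabla f_n(x_n)^\top)^\top$. NEAR-DGD$^+$: $\mathbf{x}_{k+1}=(W^{t(k)}\otimes I_p)(\mathbf{x}_k-\mu\nabla F(\mathbf{x}_k))$,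 $k\ge0$ ($\otimes$ Kronecker product). With $\mathbf{x}_k=(x_{1,k}^\top,\dots,x_{n,k}^\top)^\top$, $\bar x_k=\frac1n\sum_i x_{i,k}$. $\|\cdot\|$ is the Euclidean norm. *)

theory Defs
  imports "HOL-Analysis.Analysis"
begin

primrec matpow :: "real^'n^'n \<Rightarrow> nat \<Rightarrow> real^'n^'n" where
  "matpow A 0 = mat 1"
| "matpow A (Suc k) = A ** matpow A k"

definition doubly_stochastic :: "real^'n^'n \<Rightarrow> bool" where
  "doubly_stochastic W \<longleftrightarrow>
     (\<forall>i j. W $ i $ j \<ge> 0) \<and>
     (\<forall>i. (\<Sum>j\<in>UNIV. W $ i $ j) = 1) \<and>
     (\<forall>j. (\<Sum>i\<in>UNIV. W $ i $ j) = 1)"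

definition strongly_connected_mat :: "real^'n^'n \<Rightarrow> bool" where
  "strongly_connected_mat W \<longleftrightarrow> (\<forall>i j. (i, j) \<in> {(a, b). W $ a $ b > 0}\<^sup>*)"

definition avg_mat :: "real^'n^'n" where
  "avg_mat = (\<chi> i j. 1 / real CARD('n))"

definition spec_norm :: "real^'n^'m \<Rightarrow> real" where
  "spec_norm A = onorm (\<lambda>v. A *v v)"

definition smooth_grad :: "real \<Rightarrow> (real^'p \<Rightarrow> real^'p) \<Rightarrow> bool" where
  "smooth_grad L g \<longleftrightarrow> (\<forall>x y. norm (g x - g y) \<le> L * norm (x - y))"

definition near_dgd_step ::
  "real^'n^'n \<Rightarrow> nat \<Rightarrow> real \<Rightarrow> ('n \<Rightarrow> real^'p \<Rightarrow> real^'p) \<Rightarrow> ('n \<Rightarrow> real^'p) \<Rightarrow> ('n \<Rightarrow> real^'p)" where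
  "near_dgd_step W t \<mu> g x = (\<lambda>i. \<Sum>j\<in>UNIV. (matpow W t $ i $ j) *\<^sub>R (x j - \<mu> *\<^sub>R g j (x j)))"

end

theory Submission
  imports Defs
begin

text \<open>
  The network average \<open>xbar k\<close> of the iterates performs an inexact gradient step on \<open>f\<close>,
  with an error of at most \<open>L\<close> times the consensus error \<open>e k\<close>, the distance of the stacked
  iterate from its average. The \<open>t k\<close> consensus rounds contract \<open>e\<close> by \<open>\<beta> ^ t k\<close>, while
  the distance \<open>r k\<close> of the average from a minimiser grows by at most \<open>2 \<mu> L e k\<close>. Since
  \<open>\<Sum>k. \<beta> ^ t k < \<infinity>\<close>, a Gronwall argument bounds \<open>r k\<close> and \<open>e k\<close>, hence also
  \<open>\<Sum>k. e k\<close>. Summing the one-step inequality of inexact gradient descent, the squared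
  distances telescope, so \<open>\<Sum>k<T. f (xbar k) - f\<^sup>*\<close> is bounded independently of \<open>T\<close>, and
  Jensen's inequality turns this into the ergodic \<open>O(1/T)\<close> rate.
\<close>

section \<open>Inexact gradient steps on smooth convex functions\<close>

lemma has_real_derivative_along_line:
  fixes F :: "'a::real_inner \<Rightarrow> real"
  assumes "\<And>z. (F has_derivative (\<lambda>h. G z \<bullet> h)) (at z)"
  shows "((\<lambda>s. F (x + s *\<^sub>R v)) has_real_derivative (G (x + s *\<^sub>R v) \<bullet> v)) (at s)"
proof -
  have "((\<lambda>s. x + s *\<^sub>R v) has_derivative (\<lambda>h. h *\<^sub>R v)) (at s)"
    by (auto intro!: derivative_eq_intros)
  from has_derivative_compose[OF this assms]
  have "((\<lambda>s. F (x + s *\<^sub>R v)) has_derivative (\<lambda>h. G (x + s *\<^sub>R v) \<bullet> (h *\<^sub>R v))) (at s)"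
    by (simp add: o_def)
  then show ?thesis
    unfolding has_field_derivative_def
    by (rule has_derivative_eq_rhs) (auto simp: fun_eq_iff mult.commute)
qed

lemma descent_lemma:
  fixes F :: "'a::real_inner \<Rightarrow> real"
  assumes deriv: "\<And>z. (F has_derivative (\<lambda>h. G z \<bullet> h)) (at z)"
    and lipschitz: "\<And>a b. norm (G a - G b) \<le> L * norm (a - b)"
  shows "F y \<le> F x + G x \<bullet> (y - x) + L / 2 * (norm (y - x))\<^sup>2"
proof -
  define v where "v = y - x"
  define \<phi> where "\<phi> s = F (x + s *\<^sub>R v) - s * (G x \<bullet> v) - L / 2 * s\<^sup>2 * (norm v)\<^sup>2" for s
  have "\<phi> 1 \<le> \<phi> 0"
  proof (rule DERIV_nonpos_imp_nonincreasing[where f = \<phi>])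
    fix s :: real
    assume s: "0 \<le> s" "s \<le> 1"
    have D: "(\<phi> has_real_derivative (G (x + s *\<^sub>R v) \<bullet> v - G x \<bullet> v - L * s * (norm v)\<^sup>2)) (at s)"
      unfolding \<phi>_def
      by (rule derivative_eq_intros has_real_derivative_along_line[OF deriv] refl)+
        (simp add: algebra_simps)
    have "G (x + s *\<^sub>R v) \<bullet> v - G x \<bullet> v = (G (x + s *\<^sub>R v) - G x) \<bullet> v"
      by (simp add: inner_diff_left)
    also have "\<dots> \<le> norm (G (x + s *\<^sub>R v) - G x) * norm v"
      by (rule norm_cauchy_schwarz)
    also have "\<dots> \<le> L * norm (s *\<^sub>R v) * norm v"
      using lipschitz[of "x + s *\<^sub>R v" x] by (intro mult_right_mono) auto
    also have "\<dots> = L * s * (norm v)\<^sup>2"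
      using s by (simp add: power2_eq_square)
    finally show "\<exists>y. (\<phi> has_real_derivative y) (at s) \<and> y \<le> 0"
      using D by (intro exI[of _ "G (x + s *\<^sub>R v) \<bullet> v - G x \<bullet> v - L * s * (norm v)\<^sup>2"]) simp
  qed simp
  then show ?thesis
    unfolding \<phi>_def v_def by (simp add: algebra_simps)
qed

lemma convex_gradient_inequality:
  fixes F :: "'a::real_inner \<Rightarrow> real"
  assumes convex: "convex_on UNIV F"
    and deriv: "\<And>z. (F has_derivative (\<lambda>h. G z \<bullet> h)) (at z)"
  shows "F x + G x \<bullet> (z - x) \<le> F z"
proof -
  define \<psi> where "\<psi> s = F (x + s *\<^sub>R (z - x))" for s
  have "convex_on UNIV \<psi>"
  proof (rule convex_onI)
    fix u a b :: real
    assume "0 < u" "u < 1"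
    moreover have "\<psi> ((1 - u) *\<^sub>R a + u *\<^sub>R b)
        = F ((1 - u) *\<^sub>R (x + a *\<^sub>R (z - x)) + u *\<^sub>R (x + b *\<^sub>R (z - x)))"
      unfolding \<psi>_def by (simp add: algebra_simps)
    ultimately show "\<psi> ((1 - u) *\<^sub>R a + u *\<^sub>R b) \<le> (1 - u) * \<psi> a + u * \<psi> b"
      using convex_onD[OF convex, of u] unfolding \<psi>_def by simp
  qed simp
  moreover have "(\<psi> has_real_derivative (G (x + 0 *\<^sub>R (z - x)) \<bullet> (z - x))) (at 0)"
    unfolding \<psi>_def by (rule has_real_derivative_along_line[OF deriv])
  ultimately have "G x \<bullet> (z - x) * (1 - 0) \<le> \<psi> 1 - \<psi> 0"
    by (intro convex_on_imp_above_tangent) auto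
  then show ?thesis
    unfolding \<psi>_def by simp
qed

lemma inexact_gradient_step:
  fixes F :: "'a::real_inner \<Rightarrow> real"
  assumes convex: "convex_on UNIV F"
    and deriv: "\<And>z. (F has_derivative (\<lambda>h. G z \<bullet> h)) (at z)"
    and lipschitz: "\<And>a b. norm (G a - G b) \<le> L * norm (a - b)"
    and mu: "0 < \<mu>" "\<mu> * L \<le> 1"
    and step: "x' = x - \<mu> *\<^sub>R (G x + \<delta>)"
  shows "F x' - F z \<le> ((norm (x - z))\<^sup>2 - (norm (x' - z))\<^sup>2) / (2 * \<mu>) + norm \<delta> * norm (x' - z)"
proof -
  define d where "d = G x + \<delta>"
  define u where "u = x - z"
  have x'_x: "x' - x = - (\<mu> *\<^sub>R d)" and x'_z: "x' - z = u - \<mu> *\<^sub>R d"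
    using step by (simp_all add: d_def u_def algebra_simps)
  have "L / 2 * (norm (x' - x))\<^sup>2 = (\<mu> * L) * (\<mu> / 2 * (norm d)\<^sup>2)"
    using x'_x by (simp add: power2_eq_square)
  also have "\<dots> \<le> \<mu> / 2 * (d \<bullet> d)"
    using mu mult_right_mono[of "\<mu> * L" 1 "\<mu> / 2 * (norm d)\<^sup>2"]
    by (simp add: power2_norm_eq_inner)
  finally have "F x' - F z \<le> G x \<bullet> u - \<mu> * (G x \<bullet> d) + \<mu> / 2 * (d \<bullet> d)"
    using descent_lemma[OF deriv lipschitz, of x' x] convex_gradient_inequality[OF convex deriv, of x z] x'_x
    unfolding u_def by (simp add: inner_simps)
  also have "\<dots> = (u \<bullet> u - (u - \<mu> *\<^sub>R d) \<bullet> (u - \<mu> *\<^sub>R d)) / (2 * \<mu>) - \<delta> \<bullet> (u - \<mu> *\<^sub>R d)"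
    using mu unfolding d_def by (simp add: inner_simps field_simps inner_commute)
  also have "\<dots> \<le> (u \<bullet> u - (u - \<mu> *\<^sub>R d) \<bullet> (u - \<mu> *\<^sub>R d)) / (2 * \<mu>) + norm \<delta> * norm (u - \<mu> *\<^sub>R d)"
    using norm_cauchy_schwarz[of "- \<delta>" "u - \<mu> *\<^sub>R d"] by simp
  finally show ?thesis
    by (simp only: x'_z power2_norm_eq_inner u_def)
qed

lemma le_add_twice_if_power2_le:
  fixes r r' d :: real
  assumes "0 \<le> r" "0 \<le> r'" "0 \<le> d" "r'\<^sup>2 \<le> r\<^sup>2 + 2 * d * r'"
  shows "r' \<le> r + 2 * d"
proof (rule ccontr)
  assume "\<not> ?thesis"
  then have "r * r \<le> r' * r" "r' * (r + 2 * d) < r' * r'"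
    using assms by (auto intro: mult_right_mono mult_strict_left_mono)
  then show False
    using assms(4) by (simp add: power2_eq_square algebra_simps)
qed

text \<open>At a minimiser the left side of the one-step inequality is nonnegative, which leaves a
  quadratic inequality for the new distance.\<close>
lemma inexact_gradient_step_dist:
  fixes F :: "'a::real_inner \<Rightarrow> real"
  assumes convex: "convex_on UNIV F"
    and deriv: "\<And>z. (F has_derivative (\<lambda>h. G z \<bullet> h)) (at z)"
    and lipschitz: "\<And>a b. norm (G a - G b) \<le> L * norm (a - b)"
    and mu: "0 < \<mu>" "\<mu> * L \<le> 1"
    and step: "x' = x - \<mu> *\<^sub>R (G x + \<delta>)"
    and minimum: "\<And>y. F z \<le> F y"
  shows "norm (x' - z) \<le> norm (x - z) + 2 * (\<mu> * norm \<delta>)"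
proof (rule le_add_twice_if_power2_le)
  have "0 \<le> ((norm (x - z))\<^sup>2 - (norm (x' - z))\<^sup>2) / (2 * \<mu>) + norm \<delta> * norm (x' - z)"
    using inexact_gradient_step[OF convex deriv lipschitz mu step, of z] minimum[of x'] by simp
  then show "(norm (x' - z))\<^sup>2 \<le> (norm (x - z))\<^sup>2 + 2 * (\<mu> * norm \<delta>) * norm (x' - z)"
    using mu by (simp add: field_simps)
qed (use mu in auto)

lemma inexact_gradient_telescope:
  fixes F :: "'a::real_inner \<Rightarrow> real"
  assumes convex: "convex_on UNIV F"
    and deriv: "\<And>z. (F has_derivative (\<lambda>h. G z \<bullet> h)) (at z)"
    and lipschitz: "\<And>a b. norm (G a - G b) \<le> L * norm (a - b)"
    and mu: "0 < \<mu>" "\<mu> * L \<le> 1"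
    and step: "\<And>k. y (Suc k) = y k - \<mu> *\<^sub>R (G (y k) + \<delta> k)"
    and error: "\<And>k. norm (\<delta> k) * norm (y (Suc k) - z) \<le> d k"
  shows "(\<Sum>k<Suc T. F (y k) - F z) \<le> F (y 0) - F z + (norm (y 0 - z))\<^sup>2 / (2 * \<mu>) + (\<Sum>k<T. d k)"
proof -
  define q where "q k = (norm (y k - z))\<^sup>2 / (2 * \<mu>)" for k
  have "(\<Sum>k<T. F (y (Suc k)) - F z) \<le> (\<Sum>k<T. (q k - q (Suc k)) + d k)"
  proof (rule sum_mono)
    fix k
    show "F (y (Suc k)) - F z \<le> q k - q (Suc k) + d k"
      using inexact_gradient_step[OF convex deriv lipschitz mu step, of k z] error[of k]
      unfolding q_def by (simp add: diff_divide_distrib)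
  qed
  also have "\<dots> = q 0 - q T + (\<Sum>k<T. d k)"
    by (simp add: sum.distrib sum_lessThan_telescope')
  also have "\<dots> \<le> q 0 + (\<Sum>k<T. d k)"
    using mu by (simp add: q_def)
  finally show ?thesis
    unfolding q_def sum.lessThan_Suc_shift by linarith
qed

lemma convex_on_average_le:
  fixes F :: "'a::real_vector \<Rightarrow> real"
  assumes convex: "convex_on UNIV F" and T: "T \<noteq> 0"
  shows "real T * (F ((1 / real T) *\<^sub>R (\<Sum>k<T. y k)) - c) \<le> (\<Sum>k<T. F (y k) - c)"
proof -
  have "F (\<Sum>k<T. (1 / real T) *\<^sub>R y k) \<le> (\<Sum>k<T. (1 / real T) * F (y k))"
    using T by (intro convex_on_sum[OF _ _ convex]) auto
  then have "F ((1 / real T) *\<^sub>R (\<Sum>k<T. y k)) \<le> (\<Sum>k<T. F (y k)) / real T"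
    by (simp add: scaleR_sum_right sum_divide_distrib)
  then have "real T * F ((1 / real T) *\<^sub>R (\<Sum>k<T. y k)) \<le> (\<Sum>k<T. F (y k))"
    using T by (simp add: field_simps)
  then show ?thesis
    by (simp add: sum_subtractf right_diff_distrib)
qed

section \<open>Stacked vectors and consensus matrices\<close>

text \<open>The action of \<open>M \<otimes> I\<close> on a stacked vector whose \<open>i\<close>-th block is \<open>X $ i\<close>.\<close>
definition kron_mv :: "real^'n^'n \<Rightarrow> ('a::real_vector)^'n \<Rightarrow> 'a^'n" where
  "kron_mv M X = (\<chi> i. \<Sum>j\<in>UNIV. (M $ i $ j) *\<^sub>R X $ j)"

definition rowsums_one :: "real^'n^'n \<Rightarrow> bool" where
  "rowsums_one M \<longleftrightarrow> (\<forall>i. (\<Sum>j\<in>UNIV. M $ i $ j) = 1)"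

definition colsums_one :: "real^'n^'n \<Rightarrow> bool" where
  "colsums_one M \<longleftrightarrow> (\<forall>j. (\<Sum>i\<in>UNIV. M $ i $ j) = 1)"

definition vmean :: "('a::real_vector)^'n \<Rightarrow> 'a" where
  "vmean X = (1 / real CARD('n)) *\<^sub>R (\<Sum>i\<in>UNIV. X $ i)"

lemma kron_mv_mult: "kron_mv (A ** B) X = kron_mv A (kron_mv B X)"
  unfolding kron_mv_def matrix_matrix_mult_def vec_eq_iff
  by (simp add: scaleR_sum_right scaleR_sum_left, subst sum.swap, simp)

lemma kron_mv_mat_1: "kron_mv (mat 1) X = X"
  unfolding kron_mv_def
  by (simp add: vec_eq_iff mat_def if_distrib[of "\<lambda>x. x *\<^sub>R _"] sum.delta cong: if_cong)

lemma kron_mv_diff_left: "kron_mv (A - B) X = kron_mv A X - kron_mv B X"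
  unfolding kron_mv_def by (simp add: vec_eq_iff scaleR_diff_left sum_subtractf)

lemma kron_mv_diff_right: "kron_mv M (X - Y) = kron_mv M X - kron_mv M Y"
  unfolding kron_mv_def by (simp add: vec_eq_iff scaleR_diff_right sum_subtractf)

lemma kron_mv_vec: "rowsums_one M \<Longrightarrow> kron_mv M (vec z) = vec z"
  unfolding kron_mv_def rowsums_one_def by (simp add: vec_eq_iff scaleR_sum_left[symmetric])

lemma sum_kron_mv: "colsums_one M \<Longrightarrow> (\<Sum>i\<in>UNIV. kron_mv M X $ i) = (\<Sum>i\<in>UNIV. X $ i)"
  unfolding kron_mv_def colsums_one_def
  by (simp add: sum.swap[of _ UNIV UNIV] scaleR_sum_left[symmetric])

lemma vmean_kron_mv: "colsums_one M \<Longrightarrow> vmean (kron_mv M X) = vmean X"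
  unfolding vmean_def by (simp add: sum_kron_mv)

lemma kron_mv_avg_mat: "kron_mv avg_mat X = vec (vmean X)"
  unfolding kron_mv_def avg_mat_def vmean_def by (simp add: vec_eq_iff scaleR_sum_right)

lemma rowsums_one_mult: "rowsums_one A \<Longrightarrow> rowsums_one B \<Longrightarrow> rowsums_one (A ** B)"
  unfolding rowsums_one_def matrix_matrix_mult_def
  by (simp add: sum.swap[of _ UNIV UNIV] sum_distrib_left[symmetric])

lemma colsums_one_mult: "colsums_one A \<Longrightarrow> colsums_one B \<Longrightarrow> colsums_one (A ** B)"
  unfolding colsums_one_def matrix_matrix_mult_def
  by (simp add: sum.swap[of _ UNIV UNIV] sum_distrib_right[symmetric])

lemma rowsums_one_matpow: "rowsums_one W \<Longrightarrow> rowsums_one (matpow W k)"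
  by (induction k) (simp_all add: rowsums_one_mult, simp add: rowsums_one_def mat_def)

lemma colsums_one_matpow: "colsums_one W \<Longrightarrow> colsums_one (matpow W k)"
  by (induction k) (simp_all add: colsums_one_mult, simp add: colsums_one_def mat_def)

lemma spec_norm_nonneg: "0 \<le> spec_norm A"
  unfolding spec_norm_def by (simp add: onorm_pos_le linear_linear)

lemma norm_matrix_vector_mult_le: "norm (A *v v) \<le> spec_norm A * norm v"
  unfolding spec_norm_def by (simp add: onorm linear_linear)

text \<open>\<open>M \<otimes> I\<close> applies \<open>M\<close> to each of the \<open>p\<close> coordinate columns separately.\<close>
lemma norm_kron_mv_le:
  fixes X :: "(real^'p)^'n" and M :: "real^'n^'n"
  shows "norm (kron_mv M X) \<le> spec_norm M * norm X"
proof -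
  define col where "col c = (\<chi> i. X $ i $ c)" for c
  have sq: "(norm Z)\<^sup>2 = (\<Sum>c\<in>UNIV. \<Sum>i\<in>UNIV. (Z $ i $ c)\<^sup>2)" for Z :: "(real^'p)^'n"
    unfolding power2_norm_eq_inner inner_vec_def inner_real_def
    by (simp add: power2_eq_square sum.swap[of _ "UNIV :: 'n set"])
  have sq_col: "(norm (v :: real^'n))\<^sup>2 = (\<Sum>i\<in>UNIV. (v $ i)\<^sup>2)" for v
    unfolding power2_norm_eq_inner inner_vec_def inner_real_def by (simp add: power2_eq_square)
  have "(norm (kron_mv M X))\<^sup>2 = (\<Sum>c\<in>UNIV. (norm (M *v col c))\<^sup>2)"
    unfolding sq sq_col by (simp add: kron_mv_def col_def matrix_vector_mult_def)
  also have "\<dots> \<le> (\<Sum>c\<in>UNIV. (spec_norm M * norm (col c))\<^sup>2)"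
    by (intro sum_mono power_mono norm_matrix_vector_mult_le) simp
  also have "\<dots> = (spec_norm M * norm X)\<^sup>2"
    unfolding power_mult_distrib sum_distrib_left[symmetric] sq sq_col by (simp add: col_def)
  finally show ?thesis
    by (rule power2_le_imp_le) (simp add: spec_norm_nonneg)
qed

lemma sum_minus_vmean:
  fixes X :: "('a::real_vector)^'n"
  shows "(\<Sum>i\<in>UNIV. (X - vec (vmean X)) $ i) = 0"
proof -
  have "(\<Sum>i\<in>UNIV. (X - vec (vmean X)) $ i) = (\<Sum>i\<in>UNIV. X $ i) - real CARD('n) *\<^sub>R vmean X"
    by (simp add: sum_subtractf sum_constant_scaleR)
  also have "\<dots> = 0"
    unfolding vmean_def by simp
  finally show ?thesis .
qed

text \<open>On vectors with zero mean, \<open>W\<close> acts as \<open>W - avg_mat\<close>.\<close>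
lemma norm_kron_mv_matpow_le:
  fixes X :: "(real^'p)^'n"
  assumes rows: "rowsums_one W" and cols: "colsums_one W" and zero: "(\<Sum>i\<in>UNIV. X $ i) = 0"
  shows "norm (kron_mv (matpow W k) X) \<le> spec_norm (W - avg_mat) ^ k * norm X"
proof (induction k)
  case (Suc k)
  define Y where "Y = kron_mv (matpow W k) X"
  have "vmean Y = 0"
    using zero by (simp add: Y_def vmean_kron_mv colsums_one_matpow cols, simp add: vmean_def)
  then have "kron_mv (matpow W (Suc k)) X = kron_mv (W - avg_mat) Y"
    by (simp add: kron_mv_mult Y_def kron_mv_diff_left kron_mv_avg_mat)
  also have "norm \<dots> \<le> spec_norm (W - avg_mat) * norm Y"
    by (rule norm_kron_mv_le)
  also have "\<dots> \<le> spec_norm (W - avg_mat) * (spec_norm (W - avg_mat) ^ k * norm X)"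
    using Suc by (simp add: Y_def mult_left_mono spec_norm_nonneg)
  finally show ?case by simp
qed (simp add: kron_mv_mat_1)

lemma consensus_contraction:
  fixes Y :: "(real^'p)^'n" and k :: nat
  assumes rows: "rowsums_one W" and cols: "colsums_one W"
  defines "Z \<equiv> kron_mv (matpow W k) Y"
  shows "norm (Z - vec (vmean Z)) \<le> spec_norm (W - avg_mat) ^ k * norm (Y - vec (vmean Y))"
proof -
  have "Z - vec (vmean Z) = kron_mv (matpow W k) (Y - vec (vmean Y))"
    using rowsums_one_matpow[OF rows] colsums_one_matpow[OF cols]
    by (simp add: Z_def vmean_kron_mv kron_mv_diff_right kron_mv_vec)
  then show ?thesis
    using norm_kron_mv_matpow_le[OF rows cols sum_minus_vmean] by simp
qed

lemma norm_vec_eq: "norm (vec z :: ('a::real_normed_vector)^'n) = sqrt (real CARD('n)) * norm z"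
  unfolding norm_vec_def by (simp add: L2_set_constant)

lemma norm_minus_vmean_le:
  fixes X :: "('a::real_inner)^'n"
  shows "norm (X - vec (vmean X)) \<le> norm (X - vec z)"
proof -
  define a where "a = X - vec (vmean X)"
  define b :: "'a^'n" where "b = vec (vmean X - z)"
  have "a \<bullet> b = (\<Sum>i\<in>UNIV. a $ i) \<bullet> (vmean X - z)"
    unfolding b_def inner_vec_def by (simp add: inner_sum_left)
  then have "a \<bullet> b = 0"
    unfolding a_def sum_minus_vmean by simp
  moreover have "X - vec z = a + b"
    unfolding a_def b_def by (simp add: vec_eq_iff)
  ultimately have "(norm (X - vec z))\<^sup>2 = (norm a)\<^sup>2 + (norm b)\<^sup>2"
    unfolding power2_norm_eq_inner by (simp add: inner_simps inner_commute)
  then have "(norm a)\<^sup>2 \<le> (norm (X - vec z))\<^sup>2"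
    by simp
  then show ?thesis
    unfolding a_def by (rule power2_le_imp_le) simp
qed

lemma norm_vec_le_scaled:
  fixes A :: "('a::real_normed_vector)^'n" and B :: "('b::real_normed_vector)^'n"
  assumes "\<And>i. norm (A $ i) \<le> c * norm (B $ i)" "0 \<le> c"
  shows "norm A \<le> c * norm B"
  unfolding norm_vec_def using assms by (simp add: L2_set_right_distrib L2_set_mono)

lemma norm_vmean_le:
  fixes X :: "('a::real_normed_vector)^'n"
  assumes "\<And>i. norm (X $ i) \<le> c"
  shows "norm (vmean X) \<le> c"
proof -
  have "norm (\<Sum>i\<in>UNIV. X $ i) \<le> real CARD('n) * c"
    using norm_sum[of "\<lambda>i. X $ i" UNIV] sum_mono[of UNIV "\<lambda>i. norm (X $ i)" "\<lambda>_. c"] assms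
    by simp
  then show ?thesis
    unfolding vmean_def by (simp add: field_simps)
qed

section \<open>Recursions with summable coefficients\<close>

lemma le_exp_suminf_if_growth:
  fixes Z b :: "nat \<Rightarrow> real"
  assumes growth: "\<And>k. Z (Suc k) \<le> (1 + b k) * Z k"
    and b: "\<And>k. 0 \<le> b k" "summable b" and Z: "\<And>k. 0 \<le> Z k"
  shows "Z k \<le> Z 0 * exp (suminf b)"
proof -
  have partial: "Z k \<le> Z 0 * exp (\<Sum>j<k. b j)" for k
  proof (induction k)
    case (Suc k)
    have "Z (Suc k) \<le> (1 + b k) * Z k"
      by (rule growth)
    also have "\<dots> \<le> exp (b k) * Z k"
      using Z[of k] by (intro mult_right_mono) auto
    also have "\<dots> \<le> exp (b k) * (Z 0 * exp (\<Sum>j<k. b j))"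
      using Suc.IH by (intro mult_left_mono) auto
    finally show ?case
      by (simp add: exp_add algebra_simps)
  qed simp
  have "(\<Sum>j<k. b j) \<le> suminf b"
    using b by (intro sum_le_suminf) auto
  then show ?thesis
    using partial[of k] Z[of 0] by (smt (verit) exp_le_cancel_iff mult_left_mono)
qed

lemma sum_le_if_summable_steps:
  fixes e b :: "nat \<Rightarrow> real"
  assumes e: "\<And>k. 0 \<le> e k" "\<And>k. e (Suc k) \<le> b k * c"
    and b: "\<And>k. 0 \<le> b k" "summable b" and c: "0 \<le> c"
  shows "(\<Sum>k<T. e k) \<le> e 0 + suminf b * c"
proof -
  have "(\<Sum>k<T. e k) \<le> (\<Sum>k<Suc T. e k)"
    using e(1) by simp
  also have "\<dots> = e 0 + (\<Sum>k<T. e (Suc k))"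
    by (rule sum.lessThan_Suc_shift)
  also have "(\<Sum>k<T. e (Suc k)) \<le> (\<Sum>k<T. b k) * c"
    unfolding sum_distrib_right by (intro sum_mono e(2))
  also have "\<dots> \<le> suminf b * c"
    using b c by (intro mult_right_mono sum_le_suminf) auto
  finally show ?thesis by simp
qed

text \<open>The potential \<open>r + c e + 1\<close> grows by a factor \<open>1 + O(b k)\<close> per step, so it stays bounded.\<close>
lemma coupled_recursion_bounded:
  fixes e r b :: "nat \<Rightarrow> real"
  assumes nonneg: "\<And>k. 0 \<le> e k" "\<And>k. 0 \<le> r k" "\<And>k. 0 \<le> b k"
    and summable: "summable b" and coeffs: "0 \<le> a" "0 \<le> a0" "0 < c"
    and e_Suc: "\<And>k. e (Suc k) \<le> b k * (a * (e k + r k) + a0)"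
    and r_Suc: "\<And>k. r (Suc k) \<le> r k + c * e k"
  obtains B where "\<And>k. e k \<le> B" "\<And>k. r k \<le> B"
proof -
  define m where "m = max 1 (1 / c)"
  define Z where "Z k = r k + c * e k + 1" for k
  have Z_ge: "e k + r k \<le> m * Z k" "1 \<le> Z k" for k
  proof -
    have "1 \<le> m" "1 / c \<le> m"
      by (auto simp: m_def)
    then have "1 \<le> m" "1 \<le> c * m"
      using coeffs(3) mult_left_mono[of "1 / c" m c] by simp_all
    then have "e k \<le> m * (c * e k)" "r k + 1 \<le> m * (r k + 1)"
      using nonneg[of k] mult_right_mono[of 1 "c * m" "e k"] mult_right_mono[of 1 m "r k + 1"]
      by (simp_all add: algebra_simps)
    then show "e k + r k \<le> m * Z k"
      by (simp add: Z_def algebra_simps)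
    show "1 \<le> Z k"
      using coeffs(3) nonneg[of k] by (simp add: Z_def)
  qed
  define \<gamma> where "\<gamma> = c * (a * m + a0)"
  have "Z (Suc k) \<le> (1 + \<gamma> * b k) * Z k" for k
  proof -
    have "a * (e k + r k) + a0 \<le> (a * m + a0) * Z k"
      using mult_left_mono[OF Z_ge(1)[of k] coeffs(1)] mult_left_mono[OF Z_ge(2)[of k] coeffs(2)]
      by (simp add: algebra_simps)
    then have "c * e (Suc k) \<le> \<gamma> * b k * Z k"
      using e_Suc[of k] coeffs nonneg(3)[of k] unfolding \<gamma>_def
      by (smt (verit) mult.assoc mult.commute mult_left_mono)
    then show ?thesis
      using r_Suc[of k] by (simp add: Z_def algebra_simps)
  qed
  then have "Z k \<le> Z 0 * exp (suminf (\<lambda>k. \<gamma> * b k))" for k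
    using Z_ge(2) nonneg(3) summable coeffs m_def
    by (intro le_exp_suminf_if_growth) (auto simp: \<gamma>_def intro: summable_mult order_trans[OF zero_le_one])
  then have bound: "e k + r k \<le> m * (Z 0 * exp (suminf (\<lambda>k. \<gamma> * b k)))" for k
    using Z_ge(1)[of k] by (smt (verit) m_def mult_left_mono max.cobounded1)
  show ?thesis
  proof (rule that)
    show "e k \<le> m * (Z 0 * exp (suminf (\<lambda>k. \<gamma> * b k)))" for k
      using bound[of k] nonneg(2)[of k] by linarith
    show "r k \<le> m * (Z 0 * exp (suminf (\<lambda>k. \<gamma> * b k)))" for k
      using bound[of k] nonneg(1)[of k] by linarith
  qed
qed

section \<open>The NEAR-DGD+ iteration\<close>

locale near_dgd =
  fixes W :: "real^'n^'n" and t :: "nat \<Rightarrow> nat" and \<mu> L :: real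
    and g :: "'n \<Rightarrow> real^'p \<Rightarrow> real^'p" and x :: "nat \<Rightarrow> 'n \<Rightarrow> real^'p"
  assumes rowsums: "rowsums_one W" and colsums: "colsums_one W"
    and g_lipschitz: "\<And>i a b. norm (g i a - g i b) \<le> L * norm (a - b)"
    and L_pos: "0 < L" and mu_pos: "0 < \<mu>" and mu_L: "\<mu> * L \<le> 1"
    and iteration: "\<And>k. x (Suc k) = near_dgd_step W (t k) \<mu> g (x k)"
begin

lemma L_nonneg: "0 \<le> L"
  using L_pos by simp

definition stack :: "nat \<Rightarrow> (real^'p)^'n" where
  "stack k = (\<chi> i. x k i)"

definition xbar :: "nat \<Rightarrow> real^'p" where
  "xbar k = vmean (stack k)"

definition consensus_error :: "nat \<Rightarrow> real" where
  "consensus_error k = norm (stack k - vec (xbar k))"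

definition gbar :: "real^'p \<Rightarrow> real^'p" where
  "gbar z = vmean (\<chi> i. g i z)"

definition gradient_error :: "nat \<Rightarrow> real^'p" where
  "gradient_error k = vmean (\<chi> i. g i (x k i) - g i (xbar k))"

lemma stack_Suc: "stack (Suc k) = kron_mv (matpow W (t k)) (\<chi> i. x k i - \<mu> *\<^sub>R g i (x k i))"
  using iteration by (simp add: stack_def kron_mv_def near_dgd_step_def)

lemma xbar_Suc: "xbar (Suc k) = xbar k - \<mu> *\<^sub>R (gbar (xbar k) + gradient_error k)"
proof -
  have "xbar (Suc k) = vmean (\<chi> i. x k i - \<mu> *\<^sub>R g i (x k i))"
    by (simp add: xbar_def stack_Suc vmean_kron_mv colsums_one_matpow colsums)
  also have "\<dots> = xbar k - \<mu> *\<^sub>R vmean (\<chi> i. g i (x k i))"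
    by (simp add: xbar_def stack_def vmean_def sum_subtractf scaleR_sum_right[symmetric] algebra_simps)
  also have "vmean (\<chi> i. g i (x k i)) = gbar (xbar k) + gradient_error k"
    by (simp add: gbar_def gradient_error_def vmean_def sum_subtractf algebra_simps)
  finally show ?thesis .
qed

lemma mean_has_derivative_gbar:
  assumes "\<And>i z. (F i has_derivative (\<lambda>h. g i z \<bullet> h)) (at z)"
  shows "((\<lambda>z. (1 / real CARD('n)) * (\<Sum>i\<in>UNIV. F i z)) has_derivative (\<lambda>h. gbar z \<bullet> h)) (at z)"
proof -
  have "((\<lambda>z. (1 / real CARD('n)) * (\<Sum>i\<in>UNIV. F i z))
      has_derivative (\<lambda>h. (1 / real CARD('n)) * (\<Sum>i\<in>UNIV. g i z \<bullet> h))) (at z)"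
    using assms by (intro derivative_intros) auto
  then show ?thesis
    by (rule has_derivative_eq_rhs) (simp add: fun_eq_iff gbar_def vmean_def inner_sum_left)
qed

lemma gbar_lipschitz: "norm (gbar a - gbar b) \<le> L * norm (a - b)"
proof -
  have "gbar a - gbar b = vmean (\<chi> i. g i a - g i b)"
    by (simp add: gbar_def vmean_def sum_subtractf algebra_simps)
  then show ?thesis
    by (simp add: norm_vmean_le g_lipschitz)
qed

lemma norm_gradient_error_le: "norm (gradient_error k) \<le> L * consensus_error k"
  unfolding gradient_error_def
proof (rule norm_vmean_le)
  fix i
  have "norm (x k i - xbar k) \<le> consensus_error k"
    using Finite_Cartesian_Product.norm_nth_le[of "stack k - vec (xbar k)" i]
    by (simp add: consensus_error_def stack_def)
  then show "norm ((\<chi> i. g i (x k i) - g i (xbar k)) $ i) \<le> L * consensus_error k"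
    using g_lipschitz[of i "x k i" "xbar k"] L_nonneg by (simp add: order_trans mult_left_mono)
qed

lemma norm_stack_minus_vec_le:
  "norm (stack k - vec z) \<le> sqrt (real CARD('n)) * (consensus_error k + norm (xbar k - z))"
proof -
  have "stack k - vec z = (stack k - vec (xbar k)) + vec (xbar k - z)"
    by (simp add: vec_eq_iff)
  then have "norm (stack k - vec z) \<le> consensus_error k + sqrt (real CARD('n)) * norm (xbar k - z)"
    by (metis consensus_error_def norm_triangle_ineq norm_vec_eq)
  also have "\<dots> \<le> sqrt (real CARD('n)) * (consensus_error k + norm (xbar k - z))"
    using mult_right_mono[of 1 "sqrt (real CARD('n))" "consensus_error k"]
    by (simp add: consensus_error_def distrib_left)
  finally show ?thesis .
qed

lemma consensus_error_Suc:
  "consensus_error (Suc k) \<le> spec_norm (W - avg_mat) ^ t k *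
     (2 * sqrt (real CARD('n)) * (consensus_error k + norm (xbar k - z)) + \<mu> * norm (\<chi> i. g i z))"
proof -
  define Y where "Y = (\<chi> i. x k i - \<mu> *\<^sub>R g i (x k i))"
  define G where "G = (\<chi> i. g i (x k i))"
  define D where "D = norm (stack k - vec z)"
  have "norm (G - (\<chi> i. g i z)) \<le> L * D"
    unfolding D_def using g_lipschitz L_nonneg
    by (rule_tac norm_vec_le_scaled) (simp_all add: G_def stack_def)
  then have G_le: "norm G \<le> L * D + norm (\<chi> i. g i z)"
    using norm_triangle_sub[of G "\<chi> i. g i z"] by linarith
  have Y_minus_vec: "Y - vec z = (stack k - vec z) - \<mu> *\<^sub>R G"
    by (simp add: Y_def G_def stack_def vec_eq_iff)
  have "norm (Y - vec z) \<le> D + \<mu> * norm G"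
    unfolding Y_minus_vec D_def
    using norm_triangle_ineq4[of "stack k - vec z" "\<mu> *\<^sub>R G"] mu_pos by simp
  also have "\<dots> \<le> D + \<mu> * (L * D + norm (\<chi> i. g i z))"
    using G_le mu_pos by simp
  also have "\<dots> = (1 + \<mu> * L) * D + \<mu> * norm (\<chi> i. g i z)"
    by (simp add: algebra_simps)
  also have "\<dots> \<le> 2 * D + \<mu> * norm (\<chi> i. g i z)"
    using mu_L by (simp add: D_def mult_right_mono)
  also have "\<dots> \<le> 2 * sqrt (real CARD('n)) * (consensus_error k + norm (xbar k - z)) + \<mu> * norm (\<chi> i. g i z)"
    using norm_stack_minus_vec_le[of k z] by (simp add: D_def)
  finally have Y_le: "norm (Y - vec z) \<le> \<dots>" .
  have "consensus_error (Suc k) \<le> spec_norm (W - avg_mat) ^ t k * norm (Y - vec (vmean Y))"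
    using consensus_contraction[OF rowsums colsums, of "t k" Y]
    by (simp add: consensus_error_def xbar_def stack_Suc Y_def)
  also have "\<dots> \<le> spec_norm (W - avg_mat) ^ t k * norm (Y - vec z)"
    by (intro mult_left_mono norm_minus_vmean_le) (simp add: spec_norm_nonneg)
  finally show ?thesis
    using Y_le by (smt (verit) mult_left_mono spec_norm_nonneg zero_le_power)
qed

lemma dist_xbar_Suc_le:
  fixes F :: "real^'p \<Rightarrow> real"
  assumes convex: "convex_on UNIV F"
    and gradient: "\<And>z. (F has_derivative (\<lambda>h. gbar z \<bullet> h)) (at z)"
    and minimum: "\<And>z. F xs \<le> F z"
  shows "norm (xbar (Suc k) - xs) \<le> norm (xbar k - xs) + 2 * \<mu> * L * consensus_error k"
proof -
  have "norm (xbar (Suc k) - xs) \<le> norm (xbar k - xs) + 2 * (\<mu> * norm (gradient_error k))"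
    by (rule inexact_gradient_step_dist[OF convex gradient gbar_lipschitz mu_pos mu_L xbar_Suc minimum])
  also have "\<mu> * norm (gradient_error k) \<le> \<mu> * (L * consensus_error k)"
    using norm_gradient_error_le[of k] mu_pos by simp
  finally show ?thesis
    by (simp add: algebra_simps)
qed

lemma errors_bounded:
  fixes F :: "real^'p \<Rightarrow> real"
  assumes convex: "convex_on UNIV F"
    and gradient: "\<And>z. (F has_derivative (\<lambda>h. gbar z \<bullet> h)) (at z)"
    and minimum: "\<And>z. F xs \<le> F z"
    and summable: "summable (\<lambda>k. spec_norm (W - avg_mat) ^ t k)"
  obtains B E where "0 \<le> B" "\<And>k. consensus_error k \<le> B" "\<And>k. norm (xbar k - xs) \<le> B"
    and "\<And>T. (\<Sum>k<T. consensus_error k) \<le> E"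
proof -
  define e where "e = consensus_error"
  define r where "r k = norm (xbar k - xs)" for k
  define b where "b k = spec_norm (W - avg_mat) ^ t k" for k
  define a0 where "a0 = \<mu> * norm (\<chi> i. g i xs)"
  have nonneg: "0 \<le> e k" "0 \<le> r k" "0 \<le> b k" for k
    by (simp_all add: e_def consensus_error_def r_def b_def spec_norm_nonneg)
  have coeffs: "0 \<le> 2 * sqrt (real CARD('n))" "0 \<le> a0" "0 < 2 * \<mu> * L"
    using mu_pos L_pos by (simp_all add: a0_def)
  have e_Suc: "e (Suc k) \<le> b k * (2 * sqrt (real CARD('n)) * (e k + r k) + a0)" for k
    using consensus_error_Suc[of k xs] by (simp add: e_def r_def b_def a0_def)
  have r_Suc: "r (Suc k) \<le> r k + 2 * \<mu> * L * e k" for k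
    unfolding e_def r_def by (rule dist_xbar_Suc_le[OF convex gradient minimum])
  have "summable b"
    using summable by (simp add: b_def[abs_def])
  obtain B where B: "\<And>k. e k \<le> B" "\<And>k. r k \<le> B"
    using coupled_recursion_bounded[of e r b, OF nonneg \<open>summable b\<close> coeffs e_Suc r_Suc] by blast
  have B_nonneg: "0 \<le> B"
    using B(1)[of 0] nonneg(1)[of 0] by linarith
  have "(\<Sum>k<T. e k) \<le> e 0 + suminf b * (2 * sqrt (real CARD('n)) * (B + B) + a0)" for T
  proof (rule sum_le_if_summable_steps[OF nonneg(1) _ nonneg(3) \<open>summable b\<close>])
    show "e (Suc k) \<le> b k * (2 * sqrt (real CARD('n)) * (B + B) + a0)" for k
      using e_Suc[of k] B[of k] nonneg[of k] coeffs
      by (smt (verit) add_mono mult_left_mono)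
  qed (use B_nonneg coeffs in simp)
  with B B_nonneg show ?thesis
    using that unfolding e_def r_def by blast
qed

lemma ergodic_bound:
  fixes F :: "real^'p \<Rightarrow> real"
  assumes convex: "convex_on UNIV F"
    and gradient: "\<And>z. (F has_derivative (\<lambda>h. gbar z \<bullet> h)) (at z)"
    and minimum: "\<And>z. F xs \<le> F z"
    and summable: "summable (\<lambda>k. spec_norm (W - avg_mat) ^ t k)"
  obtains C where "\<And>T. T \<noteq> 0 \<Longrightarrow> real T * (F ((1 / real T) *\<^sub>R (\<Sum>k<T. xbar k)) - F xs) \<le> C"
proof -
  obtain B E where B: "0 \<le> B" "\<And>k. consensus_error k \<le> B" "\<And>k. norm (xbar k - xs) \<le> B"
    and E: "\<And>T. (\<Sum>k<T. consensus_error k) \<le> E"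
    using errors_bounded[OF convex gradient minimum summable] by blast
  define C where "C = F (xbar 0) - F xs + (norm (xbar 0 - xs))\<^sup>2 / (2 * \<mu>) + L * B * E"
  have sum_le: "(\<Sum>k<Suc T. F (xbar k) - F xs) \<le> C" for T
  proof -
    have "norm (gradient_error k) * norm (xbar (Suc k) - xs) \<le> L * B * consensus_error k" for k
      using mult_mono[OF norm_gradient_error_le[of k] B(3)[of "Suc k"]] B(1) L_nonneg
      by (simp add: consensus_error_def algebra_simps)
    from inexact_gradient_telescope[where d = "\<lambda>k. L * B * consensus_error k",
        OF convex gradient gbar_lipschitz mu_pos mu_L xbar_Suc this]
    have "(\<Sum>k<Suc T. F (xbar k) - F xs)
        \<le> F (xbar 0) - F xs + (norm (xbar 0 - xs))\<^sup>2 / (2 * \<mu>) + (\<Sum>k<T. L * B * consensus_error k)" .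
    also have "(\<Sum>k<T. L * B * consensus_error k) \<le> L * B * E"
      using E[of T] L_nonneg B(1) by (simp add: sum_distrib_left[symmetric] mult_left_mono)
    finally show ?thesis
      by (simp add: C_def)
  qed
  show ?thesis
  proof (rule that)
    fix T :: nat
    assume "T \<noteq> 0"
    then obtain T' where T': "T = Suc T'"
      using not0_implies_Suc by blast
    have "real T * (F ((1 / real T) *\<^sub>R (\<Sum>k<T. xbar k)) - F xs) \<le> (\<Sum>k<T. F (xbar k) - F xs)"
      using convex_on_average_le[OF convex \<open>T \<noteq> 0\<close>] .
    also have "\<dots> \<le> C"
      unfolding T' by (rule sum_le)
    finally show "real T * (F ((1 / real T) *\<^sub>R (\<Sum>k<T. xbar k)) - F xs) \<le> C" .
  qed
qed

end

theorem theorem2p4: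
  fixes W :: "real^'n^'n"
    and fs :: "'n \<Rightarrow> real^'p \<Rightarrow> real"
    and g :: "'n \<Rightarrow> real^'p \<Rightarrow> real^'p"
    and Ls :: "'n \<Rightarrow> real"
    and \<mu> :: real
    and t :: "nat \<Rightarrow> nat"
    and x :: "nat \<Rightarrow> 'n \<Rightarrow> real^'p"
  defines "f \<equiv> (\<lambda>z. (1 / real CARD('n)) * (\<Sum>i\<in>UNIV. fs i z))"
    and "\<beta> \<equiv> spec_norm (W - avg_mat)"
    and "L \<equiv> Max (range Ls)"
  assumes W_ds: "doubly_stochastic W"
    and W_sc: "strongly_connected_mat W"
    and W_loop: "\<forall>i. W $ i $ i > 0"
    and grad: "\<forall>i z. (fs i has_derivative (\<lambda>h. g i z \<bullet> h)) (at z)"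
    and Ls_pos: "\<forall>i. Ls i > 0"
    and smooth: "\<forall>i. smooth_grad (Ls i) (g i)"
    and f_convex: "convex_on UNIV f"
    and minimizer: "\<exists>xs. \<forall>z. f xs \<le> f z"
    and mu_pos: "0 < \<mu>" and mu_le: "\<mu> \<le> 1 / L"
    and t_pos: "\<forall>k. t k \<ge> 1"
    and t_sum: "summable (\<lambda>k. \<beta> ^ t k)"
    and iter: "\<forall>k. x (Suc k) = near_dgd_step W (t k) \<mu> g (x k)"
  shows "\<exists>C>0. \<forall>T::nat. T \<ge> 1 \<longrightarrow>
           real T * (f ((1 / real T) *\<^sub>R (\<Sum>k<T. (1 / real CARD('n)) *\<^sub>R (\<Sum>i\<in>UNIV. x k i))) - (INF z. f z)) \<le> C"
proof -
  txt \<open>Strong connectivity, the self-loops and \<open>t k \<ge> 1\<close> only serve to make \<open>\<beta> < 1\<close>;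
    the summability of \<open>\<beta> ^ t k\<close>, which is all the argument needs, is assumed directly.\<close>
  have Ls_le: "Ls i \<le> L" for i
    unfolding L_def by (rule Max_ge) auto
  then have L_pos: "0 < L"
    using Ls_pos by (meson less_le_trans)
  interpret near_dgd W t \<mu> L g x
  proof
    show "rowsums_one W" "colsums_one W"
      using W_ds by (auto simp: doubly_stochastic_def rowsums_one_def colsums_one_def)
    show "norm (g i a - g i b) \<le> L * norm (a - b)" for i a b
      using smooth Ls_le[of i] unfolding smooth_grad_def by (meson mult_right_mono norm_ge_zero order_trans)
    show "\<mu> * L \<le> 1"
      using mu_le L_pos by (simp add: field_simps)
  qed (use L_pos mu_pos iter in auto)
  have f_gradient: "(f has_derivative (\<lambda>h. gbar z \<bullet> h)) (at z)" for z
    unfolding f_def using grad by (intro mean_has_derivative_gbar) auto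
  obtain xs where xs: "\<And>z. f xs \<le> f z"
    using minimizer by blast
  then have "(INF z. f z) = f xs"
    by (intro cInf_eq_minimum) auto
  moreover have "(1 / real CARD('n)) *\<^sub>R (\<Sum>i\<in>UNIV. x k i) = xbar k" for k
    by (simp add: xbar_def stack_def vmean_def)
  moreover obtain C where "\<And>T. T \<noteq> 0 \<Longrightarrow> real T * (f ((1 / real T) *\<^sub>R (\<Sum>k<T. xbar k)) - f xs) \<le> C"
    using ergodic_bound[OF f_convex f_gradient xs t_sum[unfolded \<beta>_def]] by blast
  ultimately show ?thesis
    by (intro exI[of _ "max C 1"]) (auto intro: order_trans[OF _ max.cobounded1])
qed

end
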